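(* Let $U\subseteq\mathbb{F}^n$ be an open compact set and $f:U\to\mathbb{F}$ a function such that for all $x_0,x_0+x\in U$, $$f(x_0+x)=f(x_0)+f'(x_0)\cdot x+R(x_0,x)(x)\cdot x,$$ where $f'(x_0)\in\mathbb{F}^n$ and $R(x_0,x):\mathbb{F}^n\to\mathbb{F}^n$ is linear, with $$B:=\sup_{x_0,\,x_0+x\in U,\ |y|=1}|R(x_0,x)(y)\cdot y|<\infty,\qquad \delta:=\min_{x_0\in U}|f'(x_0)|>0.$$ Let $\phi\in\mathcal S(U)$ and let $m_0\in\mathbb Z$ be the smallest integer $m$ such that $U$ is a finite disjoint union of balls $x_k+B_{q^{-m}}$ on each of which $\phi$ is constant. Then $$\int_U\chi(\lambda f(x))\phi(x)\,dx=0\qquad\text{for all }\lambda\in\mathbb{F}^\times\text{ with }|\lambda|>\max\{q\delta^{-2}B,\ \delta^{-1}q^{m_0}\}.$$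
   Context: $\mathbb{F}$ is a non-archimedean local field with ring of integers $\mathfrak o_{\mathbb{F}}$, residue field of cardinality $q$, normalized absolute value $|\cdot|$ (so the uniformizer has absolute value $q^{-1}$); on $\mathbb{F}^n$, $|x|=\max_i|x_i|$ and $x\cdot y=\sum_jx_jy_j$; $B_r=\{x\in\mathbb{F}^n:|x|\le r\}$. $\chi$ is a character of $(\mathbb{F},+)$ with kernel $\mathfrak o_{\mathbb{F}}$; $dx$ is a Haar measure on $\mathbb{F}^n$; $\mathcal S(U)$ is the space of locally constant compactly supported functions on $U$. *)

theory Defs
  imports "HOL-Analysis.Analysis"
begin

text \<open>A non-archimedean local field: a field type with a normalized absolute value v,
  discrete value group q^Z, residue field of cardinality q, complete.\<close>
definition nonarch_local_field :: "('a::field \<Rightarrow> real) \<Rightarrow> nat \<Rightarrow> bool" where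
  "nonarch_local_field v q \<longleftrightarrow>
     q \<ge> 2 \<and>
     (\<forall>x. v x \<ge> 0) \<and> (\<forall>x. v x = 0 \<longleftrightarrow> x = 0) \<and>
     (\<forall>x y. v (x * y) = v x * v y) \<and>
     (\<forall>x y. v (x + y) \<le> max (v x) (v y)) \<and>
     v ` (UNIV - {0}) = range (\<lambda>k::int. real q powi k) \<and>
     (\<exists>S. finite S \<and> card S = q \<and> S \<subseteq> {x. v x \<le> 1} \<and>
          (\<forall>x. v x \<le> 1 \<longrightarrow> (\<exists>!s. s \<in> S \<and> v (x - s) < 1))) \<and>
     (\<forall>X::nat \<Rightarrow> 'a. (\<forall>e>0. \<exists>N. \<forall>m\<ge>N. \<forall>k\<ge>N. v (X m - X k) < e) \<longrightarrow>
          (\<exists>L. \<forall>e>0. \<exists>N. \<forall>m\<ge>N. v (X m - L) < e))"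

definition vnorm :: "('a \<Rightarrow> real) \<Rightarrow> 'a ^ 'n \<Rightarrow> real" where
  "vnorm v x = Max (range (\<lambda>i. v (x $ i)))"

definition vdot :: "'a::comm_semiring_0 ^ 'n \<Rightarrow> 'a ^ 'n \<Rightarrow> 'a" where
  "vdot x y = (\<Sum>i\<in>UNIV. x $ i * y $ i)"

definition Fball :: "('a::ab_group_add \<Rightarrow> real) \<Rightarrow> 'a ^ 'n \<Rightarrow> real \<Rightarrow> ('a ^ 'n) set" where
  "Fball v c r = {y. vnorm v (y - c) \<le> r}"

definition Fopen :: "('a::ab_group_add \<Rightarrow> real) \<Rightarrow> ('a ^ 'n) set \<Rightarrow> bool" where
  "Fopen v A \<longleftrightarrow> (\<forall>x\<in>A. \<exists>r>0. {y. vnorm v (y - x) < r} \<subseteq> A)"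

definition Fcompact :: "('a::ab_group_add \<Rightarrow> real) \<Rightarrow> ('a ^ 'n) set \<Rightarrow> bool" where
  "Fcompact v K \<longleftrightarrow> (\<forall>C. (\<forall>A\<in>C. Fopen v A) \<and> K \<subseteq> \<Union>C \<longrightarrow>
       (\<exists>C'\<subseteq>C. finite C' \<and> K \<subseteq> \<Union>C'))"

definition haar_measure :: "('a::ab_group_add \<Rightarrow> real) \<Rightarrow> ('a ^ 'n) measure \<Rightarrow> bool" where
  "haar_measure v \<mu> \<longleftrightarrow>
     space \<mu> = UNIV \<and> sets \<mu> = sigma_sets UNIV {A. Fopen v A} \<and>
     (\<forall>A\<in>sets \<mu>. \<forall>c. emeasure \<mu> ((\<lambda>x. c + x) ` A) = emeasure \<mu> A) \<and>
     0 < emeasure \<mu> (Fball v 0 1) \<and> emeasure \<mu> (Fball v 0 1) < \<infinity>"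

definition char_kernel_O :: "('a::field \<Rightarrow> real) \<Rightarrow> ('a \<Rightarrow> complex) \<Rightarrow> bool" where
  "char_kernel_O v ch \<longleftrightarrow> (\<forall>x y. ch (x + y) = ch x * ch y) \<and> (\<forall>x. cmod (ch x) = 1) \<and>
     {x. ch x = 1} = {x. v x \<le> 1}"

definition schwartz_on :: "('a::ab_group_add \<Rightarrow> real) \<Rightarrow> ('a ^ 'n) set \<Rightarrow> ('a ^ 'n \<Rightarrow> complex) \<Rightarrow> bool" where
  "schwartz_on v U \<phi> \<longleftrightarrow>
     (\<forall>x\<in>U. \<exists>r>0. \<forall>y. vnorm v (y - x) < r \<longrightarrow> \<phi> y = \<phi> x) \<and>
     (\<exists>K. Fcompact v K \<and> K \<subseteq> U \<and> (\<forall>x\<in>U - K. \<phi> x = 0))"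

definition ball_decomp :: "('a::ab_group_add \<Rightarrow> real) \<Rightarrow> nat \<Rightarrow> ('a ^ 'n) set \<Rightarrow> ('a ^ 'n \<Rightarrow> complex) \<Rightarrow> int \<Rightarrow> bool" where
  "ball_decomp v q U \<phi> m \<longleftrightarrow>
     (\<exists>X. finite X \<and> U = (\<Union>x\<in>X. Fball v x (real q powi (-m))) \<and>
        (\<forall>x\<in>X. \<forall>y\<in>X. x \<noteq> y \<longrightarrow> Fball v x (real q powi (-m)) \<inter> Fball v y (real q powi (-m)) = {}) \<and>
        (\<forall>x\<in>X. \<forall>y\<in>Fball v x (real q powi (-m)). \<phi> y = \<phi> x))"

end

theory Submission
  imports Defs
begin

text \<open>Let r = q / (|\<lambda>| \<delta>). Since |\<lambda>| \<delta> > q^m0 and absolute values are powers of q, we get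
  r \<le> q^-m0, so for c \<in> U the ball c + B_r lies inside one ball of the decomposition and \<phi> is
  constant on it. On that ball the Taylor remainder has |\<lambda> R(c,z)(z)\<cdot>z| \<le> |\<lambda>| B r^2 < q, hence
  it is at most 1 and invisible to \<chi>; the integrand is therefore a constant times the linear
  character \<chi>(a\<cdot>(x - c)) with |a| = |\<lambda>| |f'(c)| \<ge> q / r. Translating by some y \<in> B_r with
  a\<cdot>y = \<pi>, |\<pi>| = q, multiplies the integral over the ball by \<chi>(\<pi>) \<noteq> 1, so it vanishes. By
  compactness and the ultrametric inequality, U is a finite disjoint union of such balls.\<close>

locale local_field =
  fixes v :: "'a::field \<Rightarrow> real" and q :: nat
  assumes local_field: "nonarch_local_field v q"
begin

lemma q_ge_2: "real q \<ge> 2"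
  and absv_nonneg: "v x \<ge> 0"
  and absv_eq_0_iff [simp]: "v x = 0 \<longleftrightarrow> x = 0"
  and absv_mult: "v (x * y) = v x * v y"
  and absv_ultrametric: "v (x + y) \<le> max (v x) (v y)"
  and absv_value_group: "v ` (UNIV - {0}) = range (\<lambda>k::int. real q powi k)"
  using local_field unfolding nonarch_local_field_def by auto

lemma absv_zero [simp]: "v 0 = 0"
  by simp

lemma absv_one [simp]: "v 1 = 1"
  using absv_mult[of 1 1] by simp

lemma absv_minus [simp]: "v (- x) = v x"
proof -
  have "v (-1) * v (-1) = 1"
    by (simp flip: absv_mult)
  then have "(v (-1) - 1) * (v (-1) + 1) = 0"
    by (simp add: algebra_simps)
  then have "v (-1) = 1"
    using absv_nonneg[of "-1"] by auto
  then show ?thesis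
    using absv_mult[of "-1" x] by simp
qed

lemma absv_inverse: "v (inverse x) = inverse (v x)"
proof (cases "x = 0")
  case False
  then have "v x * v (inverse x) = 1"
    by (simp flip: absv_mult)
  then show ?thesis
    by (simp add: inverse_unique)
qed simp

lemma absv_divide: "v (x / y) = v x / v y"
  by (simp add: divide_inverse absv_mult absv_inverse)

lemma absv_power_int:
  assumes "x \<noteq> 0" obtains k where "v x = real q powi k"
  using assms absv_value_group by blast

lemma exists_absv_eq_power_int: "\<exists>x. x \<noteq> 0 \<and> v x = real q powi k"
proof -
  have "real q powi k \<in> v ` (UNIV - {0})"
    by (simp add: absv_value_group)
  then show ?thesis
    by auto
qed

lemma absv_le_1_of_less_q:
  assumes "v x < real q" shows "v x \<le> 1"
proof (cases "x = 0")
  case False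
  then obtain k where k: "v x = real q powi k"
    by (rule absv_power_int)
  have "k \<le> 0"
  proof (rule ccontr)
    assume "\<not> k \<le> 0"
    then have "real q powi 1 \<le> real q powi k"
      using q_ge_2 by (intro power_int_increasing) auto
    with assms k show False
      by simp
  qed
  then show ?thesis
    using k q_ge_2 by (metis power_int_0_right power_int_increasing order.trans one_le_numeral)
qed simp

lemma q_divide_absv_le_power_int:
  assumes "real q powi m < v x" shows "real q / v x \<le> real q powi (- m)"
proof -
  have "0 < real q powi m"
    using q_ge_2 by simp
  with assms have "x \<noteq> 0"
    by auto
  then obtain k where k: "v x = real q powi k"
    by (rule absv_power_int)
  have "m < k"
  proof (rule ccontr)
    assume "\<not> m < k"
    then have "real q powi k \<le> real q powi m"
      using q_ge_2 by (intro power_int_increasing) auto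
    with assms k show False
      by simp
  qed
  have "real q / v x = real q powi (1 - k)"
    using k q_ge_2 by (simp add: power_int_diff)
  also have "\<dots> \<le> real q powi (- m)"
    using \<open>m < k\<close> q_ge_2 by (intro power_int_increasing) auto
  finally show ?thesis .
qed

end

lemma vnorm_ge: "v (x $ i) \<le> vnorm v x"
  unfolding vnorm_def by (rule Max_ge) auto

lemma vnorm_attained: obtains i where "vnorm v x = v (x $ i)"
proof -
  have "vnorm v x \<in> range (\<lambda>i. v (x $ i))"
    unfolding vnorm_def by (rule Max_in) auto
  then show ?thesis
    using that by auto
qed

lemma vnorm_le_iff: "vnorm v x \<le> r \<longleftrightarrow> (\<forall>i. v (x $ i) \<le> r)"
  unfolding vnorm_def by (subst Max_le_iff) auto

lemma Fopen_translate_preimage: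
  assumes "Fopen v A" shows "Fopen v ((\<lambda>x::'a::ab_group_add^'n. x + y) -` A)"
  unfolding Fopen_def
proof
  fix x assume "x \<in> (\<lambda>x. x + y) -` A"
  then obtain r where r: "r > 0" "{z. vnorm v (z - (x + y)) < r} \<subseteq> A"
    using assms unfolding Fopen_def by auto
  have "{z. vnorm v (z - x) < r} \<subseteq> (\<lambda>x. x + y) -` A"
  proof
    fix z assume "z \<in> {z. vnorm v (z - x) < r}"
    then have "z + y \<in> {z. vnorm v (z - (x + y)) < r}"
      by (simp add: algebra_simps)
    then show "z \<in> (\<lambda>x. x + y) -` A"
      using r by auto
  qed
  then show "\<exists>r>0. {z. vnorm v (z - x) < r} \<subseteq> (\<lambda>x. x + y) -` A"
    using r by auto
qed

lemma haar_sets_Fopen: "haar_measure v \<mu> \<Longrightarrow> Fopen v A \<Longrightarrow> A \<in> sets \<mu>"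
  unfolding haar_measure_def by (auto intro: sigma_sets.Basic)

lemma haar_translation_measurable:
  assumes haar: "haar_measure v \<mu>"
  shows "(\<lambda>x::'a::ab_group_add^'n. x + y) \<in> measurable \<mu> \<mu>"
proof (rule measurable_sigma_sets)
  show "sets \<mu> = sigma_sets UNIV {A. Fopen v A}"
    using haar unfolding haar_measure_def by auto
  fix A :: "('a^'n) set" assume "A \<in> {A. Fopen v A}"
  then show "(\<lambda>x. x + y) -` A \<inter> space \<mu> \<in> sets \<mu>"
    using haar by (auto intro: haar_sets_Fopen Fopen_translate_preimage)
qed auto

lemma haar_distr_translation:
  assumes haar: "haar_measure v \<mu>"
  shows "distr \<mu> \<mu> (\<lambda>x::'a::ab_group_add^'n. x + y) = \<mu>"
proof (rule measure_eqI)
  fix A assume "A \<in> sets (distr \<mu> \<mu> (\<lambda>x. x + y))"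
  then have A: "A \<in> sets \<mu>"
    by simp
  have "(\<lambda>x. x + y) -` A \<inter> space \<mu> = (\<lambda>x. (- y) + x) ` A"
    using haar unfolding haar_measure_def by (auto simp: image_iff algebra_simps)
  then have "emeasure (distr \<mu> \<mu> (\<lambda>x. x + y)) A = emeasure \<mu> ((\<lambda>x. (- y) + x) ` A)"
    by (simp add: emeasure_distr[OF haar_translation_measurable[OF haar] A])
  also have "\<dots> = emeasure \<mu> A"
    using haar A unfolding haar_measure_def by blast
  finally show "emeasure (distr \<mu> \<mu> (\<lambda>x. x + y)) A = emeasure \<mu> A" .
qed simp

lemma haar_integral_translate:
  fixes h :: "'a::ab_group_add^'n \<Rightarrow> 'b::{banach, second_countable_topology}"
  assumes haar: "haar_measure v \<mu>" and h: "h \<in> borel_measurable \<mu>"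
  shows "integral\<^sup>L \<mu> (\<lambda>x. h (x + y)) = integral\<^sup>L \<mu> h"
  using integral_distr[OF haar_translation_measurable[OF haar] h] haar_distr_translation[OF haar]
  by simp

text \<open>If \<open>h\<close> is integrable, translation invariance gives \<open>I = \<kappa> I\<close>; otherwise \<open>I = 0\<close> by the
  convention for non-integrable functions.\<close>
lemma haar_integral_eq_0_of_shift:
  fixes h :: "'a::ab_group_add^'n \<Rightarrow> complex"
  assumes haar: "haar_measure v \<mu>" and shift: "\<And>x. h (x + y) = \<kappa> * h x" and "\<kappa> \<noteq> 1"
  shows "integral\<^sup>L \<mu> h = 0"
proof (cases "integrable \<mu> h")
  case True
  have "integral\<^sup>L \<mu> h = integral\<^sup>L \<mu> (\<lambda>x. h (x + y))"
    using haar_integral_translate[OF haar borel_measurable_integrable[OF True]] by simp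
  also have "\<dots> = \<kappa> * integral\<^sup>L \<mu> h"
    by (simp add: shift)
  finally have "(1 - \<kappa>) * integral\<^sup>L \<mu> h = 0"
    by (simp add: algebra_simps)
  with \<open>\<kappa> \<noteq> 1\<close> show ?thesis
    by simp
qed (simp add: not_integrable_integral_eq)

lemma set_integral_eq_0_of_partition:
  fixes g :: "_ \<Rightarrow> 'b::{banach, second_countable_topology}"
  assumes "finite C" "disjoint C" "C \<subseteq> sets \<mu>" "\<Union>C = U"
    and zero: "\<And>S. S \<in> C \<Longrightarrow> set_lebesgue_integral \<mu> S g = 0"
  shows "set_lebesgue_integral \<mu> U g = 0"
proof (cases "set_integrable \<mu> U g")
  case True
  have "disjoint_family_on (\<lambda>S. S) C"
    using \<open>disjoint C\<close> by (intro disjoint_image_disjoint_family_on) auto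
  then have "set_lebesgue_integral \<mu> (\<Union>S\<in>C. S) g = (\<Sum>S\<in>C. set_lebesgue_integral \<mu> S g)"
    using assms True by (intro set_integral_finite_Union) (auto intro: set_integrable_subset)
  with assms show ?thesis
    by simp
qed (simp add: set_lebesgue_integral_def set_integrable_def not_integrable_integral_eq)

lemma vdot_add_right: "vdot a (u + w) = vdot a u + vdot a (w :: 'a::comm_ring_1^'n)"
  unfolding vdot_def by (simp add: distrib_left sum.distrib)

lemma vdot_smult_left: "vdot (c *s u) w = c * vdot u (w :: 'a::comm_ring_1^'n)"
  unfolding vdot_def by (simp add: sum_distrib_left mult.assoc)

lemma vdot_smult_right: "vdot u (c *s w) = c * vdot u (w :: 'a::comm_ring_1^'n)"
  unfolding vdot_def by (simp add: sum_distrib_left algebra_simps)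

lemma vdot_axis_right: "vdot (a :: 'a::comm_ring_1^'n) (axis i t) = a $ i * t"
  unfolding vdot_def axis_def by (simp add: if_distrib cong: if_cong)

lemma char_add: "char_kernel_O v ch \<Longrightarrow> ch (x + y) = ch x * ch y"
  unfolding char_kernel_O_def by auto

lemma char_eq_1_iff: "char_kernel_O v ch \<Longrightarrow> ch x = 1 \<longleftrightarrow> v x \<le> 1"
  unfolding char_kernel_O_def by (auto simp: set_eq_iff)

context local_field
begin

lemma vnorm_nonneg: "vnorm v x \<ge> 0"
  using vnorm_ge[of v x] absv_nonneg order_trans by blast

lemma vnorm_zero [simp]: "vnorm v 0 = 0"
  unfolding vnorm_def by simp

lemma vnorm_eq_0_iff [simp]: "vnorm v x = 0 \<longleftrightarrow> x = 0"
proof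
  assume "vnorm v x = 0"
  then have "\<forall>i. v (x $ i) \<le> 0"
    by (simp add: vnorm_le_iff[symmetric])
  then have "\<And>i. v (x $ i) = 0"
    using absv_nonneg by (meson order_antisym)
  then show "x = 0"
    by (simp add: vec_eq_iff)
qed simp

lemma vnorm_ultrametric: "vnorm v (x + y) \<le> max (vnorm v x) (vnorm v y)"
  unfolding vnorm_le_iff
proof
  fix i
  have "v ((x + y) $ i) \<le> max (v (x $ i)) (v (y $ i))"
    by (simp add: absv_ultrametric)
  also have "\<dots> \<le> max (vnorm v x) (vnorm v y)"
    using vnorm_ge[of v x i] vnorm_ge[of v y i] by (rule max.mono)
  finally show "v ((x + y) $ i) \<le> max (vnorm v x) (vnorm v y)" .
qed

lemma vnorm_minus [simp]: "vnorm v (- x) = vnorm v x"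
  unfolding vnorm_def by simp

lemma vnorm_minus_commute: "vnorm v (x - y) = vnorm v (y - x)"
  by (metis minus_diff_eq vnorm_minus)

lemma vnorm_smult: "vnorm v (c *s x) = v c * vnorm v x"
proof (rule antisym)
  obtain i where i: "vnorm v (c *s x) = v ((c *s x) $ i)"
    by (rule vnorm_attained)
  then show "vnorm v (c *s x) \<le> v c * vnorm v x"
    using vnorm_ge[of v x i] absv_nonneg[of c] by (simp add: absv_mult mult_left_mono)
  obtain j where "vnorm v x = v (x $ j)"
    by (rule vnorm_attained)
  then show "v c * vnorm v x \<le> vnorm v (c *s x)"
    using vnorm_ge[of v "c *s x" j] by (simp add: absv_mult)
qed

lemma vnorm_axis: "vnorm v (axis i t) = v t"
proof (rule antisym)
  show "vnorm v (axis i t) \<le> v t"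
    unfolding vnorm_le_iff axis_def using absv_nonneg by simp
  show "v t \<le> vnorm v (axis i t)"
    using vnorm_ge[of v "axis i t" i] by (simp add: axis_def)
qed

lemma center_in_Fball: "0 \<le> r \<Longrightarrow> c \<in> Fball v c r"
  unfolding Fball_def by simp

lemma Fopen_Fball: "0 < r \<Longrightarrow> Fopen v (Fball v c r)"
  unfolding Fopen_def Fball_def
proof (intro ballI exI conjI subsetI)
  fix x y assume "0 < r" "x \<in> {y. vnorm v (y - c) \<le> r}" "y \<in> {y. vnorm v (y - x) < r}"
  moreover have "vnorm v (y - c) \<le> max (vnorm v (y - x)) (vnorm v (x - c))"
    using vnorm_ultrametric[of "y - x" "x - c"] by simp
  ultimately show "y \<in> {y. vnorm v (y - c) \<le> r}"
    by auto
qed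

lemma Fball_add: "x \<in> Fball v c r \<Longrightarrow> vnorm v y \<le> r \<Longrightarrow> x + y \<in> Fball v c r"
  unfolding Fball_def using vnorm_ultrametric[of "x - c" y] by (auto simp: algebra_simps)

lemma Fball_subset:
  assumes "x \<in> Fball v c r" "s \<le> r" shows "Fball v x s \<subseteq> Fball v c r"
proof
  fix y assume "y \<in> Fball v x s"
  moreover have "vnorm v (y - c) \<le> max (vnorm v (y - x)) (vnorm v (x - c))"
    using vnorm_ultrametric[of "y - x" "x - c"] by simp
  ultimately show "y \<in> Fball v c r"
    using assms unfolding Fball_def by auto
qed

text \<open>Every point of an ultrametric ball is a centre of it.\<close>
lemma Fball_eq:
  assumes p: "p \<in> Fball v c r" "p \<in> Fball v d r" shows "Fball v c r = Fball v d r"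
proof -
  have "vnorm v (c - p) \<le> r" "vnorm v (d - p) \<le> r"
    using p vnorm_minus_commute[of c p] vnorm_minus_commute[of d p] unfolding Fball_def by auto
  then have "c \<in> Fball v d r" "d \<in> Fball v c r"
    using Fball_add[OF p(2), of "c - p"] Fball_add[OF p(1), of "d - p"] by simp_all
  then show ?thesis
    using Fball_subset by blast
qed

lemma exists_vdot_eq:
  assumes "a \<noteq> 0"
  obtains y where "vdot a y = t" "vnorm v y = v t / vnorm v a"
proof -
  obtain i where i: "vnorm v a = v (a $ i)"
    by (rule vnorm_attained)
  with assms have "a $ i \<noteq> 0"
    by (metis absv_eq_0_iff vnorm_eq_0_iff)
  then have "vdot a (axis i (t / a $ i)) = t" "vnorm v (axis i (t / a $ i)) = v t / vnorm v a"
    by (simp_all add: vdot_axis_right vnorm_axis absv_divide i)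
  then show ?thesis
    using that by blast
qed

text \<open>Translating by a vector \<open>y\<close> of the ball with \<open>vdot a y = \<pi>\<close>, \<open>|\<pi>| = q\<close>, multiplies the
  integrand by \<open>ch \<pi> \<noteq> 1\<close>.\<close>
lemma integral_phase_Fball_eq_0:
  assumes chi: "char_kernel_O v ch" and haar: "haar_measure v \<mu>"
    and large: "real q \<le> r * vnorm v a"
    and g: "\<And>x. x \<in> Fball v c r \<Longrightarrow> g x = K * ch (vdot a (x - c))"
  shows "set_lebesgue_integral \<mu> (Fball v c r) g = 0"
proof -
  define S where "S = Fball v c r"
  have "a \<noteq> 0"
    using large q_ge_2 by auto
  then have a_pos: "0 < vnorm v a"
    using vnorm_nonneg[of a] by (simp add: order_le_less)
  obtain \<pi> where \<pi>: "v \<pi> = real q"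
    using exists_absv_eq_power_int[of 1] by auto
  obtain y where y: "vdot a y = \<pi>" "vnorm v y = v \<pi> / vnorm v a"
    using \<open>a \<noteq> 0\<close> by (rule exists_vdot_eq)
  have "vnorm v y \<le> r"
    using y(2) \<pi> large a_pos by (simp add: divide_le_eq)
  have "ch \<pi> \<noteq> 1"
    using char_eq_1_iff[OF chi] \<pi> q_ge_2 by simp
  have S_translate: "x + y \<in> S \<longleftrightarrow> x \<in> S" for x
    using Fball_add[of x c r y] Fball_add[of "x + y" c r "- y"] \<open>vnorm v y \<le> r\<close>
    unfolding S_def by auto
  have shift: "indicator S (x + y) *\<^sub>R g (x + y) = ch \<pi> * (indicator S x *\<^sub>R g x)" for x
  proof (cases "x \<in> S")
    case True
    then have "g (x + y) = ch \<pi> * g x"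
      using g S_translate y(1) unfolding S_def
      by (simp add: vdot_add_right char_add[OF chi] diff_add_eq[symmetric])
    with True S_translate show ?thesis
      by simp
  qed (simp add: S_translate)
  show ?thesis
    unfolding set_lebesgue_integral_def S_def[symmetric]
    by (rule haar_integral_eq_0_of_shift[where h = "\<lambda>x. indicator S x *\<^sub>R g x", OF haar shift \<open>ch \<pi> \<noteq> 1\<close>])
qed

lemma quadratic_form_absv_le:
  fixes L :: "'a^'n \<Rightarrow> 'a^'n"
  assumes smult: "\<And>c y. L (c *s y) = c *s L y"
    and unit: "\<And>y. vnorm v y = 1 \<Longrightarrow> v (vdot (L y) y) \<le> B" and "0 \<le> B"
  shows "v (vdot (L z) z) \<le> B * (vnorm v z)\<^sup>2"
proof (cases "z = 0")
  case False
  obtain i where i: "vnorm v z = v (z $ i)"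
    by (rule vnorm_attained)
  define t where "t = z $ i"
  have "t \<noteq> 0"
    using False i unfolding t_def by (metis absv_eq_0_iff vnorm_eq_0_iff)
  define w where "w = inverse t *s z"
  have z: "z = t *s w"
    unfolding w_def using \<open>t \<noteq> 0\<close> by (simp add: vector_smult_assoc)
  have "vnorm v w = 1"
    unfolding w_def using \<open>t \<noteq> 0\<close> i by (simp add: vnorm_smult absv_inverse t_def)
  have "vdot (L z) z = t * t * vdot (L w) w"
    unfolding z by (simp add: smult vdot_smult_left vdot_smult_right)
  then have "v (vdot (L z) z) = (vnorm v z)\<^sup>2 * v (vdot (L w) w)"
    by (simp add: absv_mult i t_def power2_eq_square)
  also have "\<dots> \<le> (vnorm v z)\<^sup>2 * B"
    using unit[OF \<open>vnorm v w = 1\<close>] by (simp add: mult_left_mono)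
  finally show ?thesis
    by (simp add: mult.commute)
qed (simp add: vdot_def \<open>0 \<le> B\<close>)

text \<open>By discreteness an absolute value below \<open>q\<close> is at most \<open>1\<close>, i.e.\ the remainder lies in
  the kernel of the character.\<close>
lemma char_quadratic_remainder_eq_1:
  fixes L :: "'a^'n \<Rightarrow> 'a^'n"
  assumes chi: "char_kernel_O v ch"
    and smult: "\<And>c y. L (c *s y) = c *s L y"
    and unit: "\<And>y. vnorm v y = 1 \<Longrightarrow> v (vdot (L y) y) \<le> B" and "0 \<le> B"
    and small: "v lam * B * (vnorm v z)\<^sup>2 < real q"
  shows "ch (lam * vdot (L z) z) = 1"
proof -
  have "v (lam * vdot (L z) z) \<le> v lam * (B * (vnorm v z)\<^sup>2)"
    unfolding absv_mult
    using quadratic_form_absv_le[OF smult unit \<open>0 \<le> B\<close>] absv_nonneg by (rule mult_left_mono)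
  with small have "v (lam * vdot (L z) z) < real q"
    by (simp add: mult.assoc)
  then show ?thesis
    using char_eq_1_iff[OF chi] absv_le_1_of_less_q by blast
qed

lemma ball_decomp_Fball:
  assumes "ball_decomp v q U \<phi> m" "c \<in> U" "r \<le> real q powi (- m)"
  shows "Fball v c r \<subseteq> U" "z \<in> Fball v c r \<Longrightarrow> \<phi> z = \<phi> c"
proof -
  obtain X where X: "U = (\<Union>x\<in>X. Fball v x (real q powi (- m)))"
    "\<forall>x\<in>X. \<forall>y\<in>Fball v x (real q powi (- m)). \<phi> y = \<phi> x"
    using assms(1) unfolding ball_decomp_def by auto
  then obtain x where x: "x \<in> X" "c \<in> Fball v x (real q powi (- m))"
    using assms(2) by blast
  have "Fball v c r \<subseteq> Fball v x (real q powi (- m))"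
    using x(2) assms(3) by (rule Fball_subset)
  with X x show "Fball v c r \<subseteq> U" "z \<in> Fball v c r \<Longrightarrow> \<phi> z = \<phi> c"
    by auto
qed

lemma Fcompact_Fball_partition:
  assumes "Fcompact v U" "0 < r" and sub: "\<And>c. c \<in> U \<Longrightarrow> Fball v c r \<subseteq> U"
  obtains C where "finite C" "C \<subseteq> (\<lambda>c. Fball v c r) ` U" "disjoint C" "\<Union>C = U"
proof -
  have "\<forall>A\<in>(\<lambda>c. Fball v c r) ` U. Fopen v A" "U \<subseteq> \<Union>((\<lambda>c. Fball v c r) ` U)"
    using \<open>0 < r\<close> center_in_Fball[of r] by (auto intro: Fopen_Fball)
  then obtain C where C: "C \<subseteq> (\<lambda>c. Fball v c r) ` U" "finite C" "U \<subseteq> \<Union>C"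
    using assms(1)[unfolded Fcompact_def, rule_format, of "(\<lambda>c. Fball v c r) ` U"] by blast
  have "disjoint C"
  proof (rule pairwiseI)
    fix A B assume "A \<in> C" "B \<in> C" "A \<noteq> B"
    with C(1) obtain c d where "A = Fball v c r" "B = Fball v d r"
      by blast
    with \<open>A \<noteq> B\<close> show "disjnt A B"
      using Fball_eq[of _ c r d] unfolding disjnt_def by blast
  qed
  moreover have "\<Union>C = U"
    using C sub by blast
  ultimately show ?thesis
    using that C by blast
qed

lemma set_integral_eq_0_of_Fball_cover:
  fixes g :: "'a^'n \<Rightarrow> 'b::{banach, second_countable_topology}"
  assumes "Fcompact v U" "haar_measure v \<mu>" "0 < r"
    and sub: "\<And>c. c \<in> U \<Longrightarrow> Fball v c r \<subseteq> U"
    and zero: "\<And>c. c \<in> U \<Longrightarrow> set_lebesgue_integral \<mu> (Fball v c r) g = 0"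
  shows "set_lebesgue_integral \<mu> U g = 0"
proof -
  obtain C where C: "finite C" "C \<subseteq> (\<lambda>c. Fball v c r) ` U" "disjoint C" "\<Union>C = U"
    using assms(1,3) sub by (rule Fcompact_Fball_partition)
  show ?thesis
  proof (rule set_integral_eq_0_of_partition[OF C(1,3) _ C(4)])
    show "C \<subseteq> sets \<mu>"
      using C(2) haar_sets_Fopen[OF assms(2) Fopen_Fball[OF \<open>0 < r\<close>]] by blast
  qed (use C(2) zero in blast)
qed

lemma integral_Fball_eq_0_of_taylor:
  fixes L :: "'a^'n \<Rightarrow> 'a^'n \<Rightarrow> 'a^'n"
  assumes chi: "char_kernel_O v ch" and haar: "haar_measure v \<mu>"
    and taylor: "\<And>x. x \<in> Fball v c r \<Longrightarrow> f x = f c + vdot d (x - c) + vdot (L x (x - c)) (x - c)"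
    and smult: "\<And>x s y. x \<in> Fball v c r \<Longrightarrow> L x (s *s y) = s *s L x y"
    and unit: "\<And>x y. x \<in> Fball v c r \<Longrightarrow> vnorm v y = 1 \<Longrightarrow> v (vdot (L x y) y) \<le> B"
    and const: "\<And>x. x \<in> Fball v c r \<Longrightarrow> \<phi> x = \<phi> c"
    and "0 \<le> B" and small: "v lam * B * r\<^sup>2 < real q" and large: "real q \<le> r * (v lam * vnorm v d)"
  shows "set_lebesgue_integral \<mu> (Fball v c r) (\<lambda>x. ch (lam * f x) * \<phi> x) = 0"
proof (rule integral_phase_Fball_eq_0[OF chi haar, where K = "ch (lam * f c) * \<phi> c" and a = "lam *s d"])
  show "real q \<le> r * vnorm v (lam *s d)"
    using large by (simp add: vnorm_smult)
  fix x assume x: "x \<in> Fball v c r"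
  then have "v lam * B * (vnorm v (x - c))\<^sup>2 \<le> v lam * B * r\<^sup>2"
    using \<open>0 \<le> B\<close> absv_nonneg[of lam] vnorm_nonneg[of "x - c"]
    by (intro mult_left_mono power_mono) (auto simp: Fball_def)
  with small have "v lam * B * (vnorm v (x - c))\<^sup>2 < real q"
    by linarith
  with chi smult[OF x] unit[OF x] \<open>0 \<le> B\<close> have "ch (lam * vdot (L x (x - c)) (x - c)) = 1"
    by (rule char_quadratic_remainder_eq_1)
  moreover have "lam * f x = lam * f c + vdot (lam *s d) (x - c) + lam * vdot (L x (x - c)) (x - c)"
    using taylor[OF x] by (simp add: vdot_smult_left distrib_left)
  ultimately show "ch (lam * f x) * \<phi> x = ch (lam * f c) * \<phi> c * ch (vdot (lam *s d) (x - c))"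
    using const[OF x] by (simp add: char_add[OF chi])
qed

end

theorem mainTheorem18:
  fixes v :: "'a::field \<Rightarrow> real" and q :: nat and ch :: "'a \<Rightarrow> complex"
    and \<mu> :: "('a ^ 'n) measure" and U :: "('a ^ 'n) set"
    and f :: "'a ^ 'n \<Rightarrow> 'a" and f' :: "'a ^ 'n \<Rightarrow> 'a ^ 'n"
    and R :: "'a ^ 'n \<Rightarrow> 'a ^ 'n \<Rightarrow> 'a ^ 'n \<Rightarrow> 'a ^ 'n"
    and B \<delta> :: real and \<phi> :: "'a ^ 'n \<Rightarrow> complex" and m0 :: int
  assumes F: "nonarch_local_field v q"
    and chi: "char_kernel_O v ch"
    and haar: "haar_measure v \<mu>"
    and U_open: "Fopen v U" and U_compact: "Fcompact v U"
    and taylor: "\<And>x0 x. x0 \<in> U \<Longrightarrow> x0 + x \<in> U \<Longrightarrow>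
        f (x0 + x) = f x0 + vdot (f' x0) x + vdot (R x0 x x) x"
    and R_add: "\<And>x0 x y z. x0 \<in> U \<Longrightarrow> x0 + x \<in> U \<Longrightarrow> R x0 x (y + z) = R x0 x y + R x0 x z"
    and R_smult: "\<And>x0 x c y. x0 \<in> U \<Longrightarrow> x0 + x \<in> U \<Longrightarrow> R x0 x (c *s y) = c *s R x0 x y"
    and B_bdd: "bdd_above {v (vdot (R x0 x y) y) | x0 x y. x0 \<in> U \<and> x0 + x \<in> U \<and> vnorm v y = 1}"
    and B_def: "B = Sup {v (vdot (R x0 x y) y) | x0 x y. x0 \<in> U \<and> x0 + x \<in> U \<and> vnorm v y = 1}"
    and delta_min: "\<exists>x0\<in>U. vnorm v (f' x0) = \<delta>" "\<And>x0. x0 \<in> U \<Longrightarrow> \<delta> \<le> vnorm v (f' x0)"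
    and delta_pos: "\<delta> > 0"
    and phi: "schwartz_on v U \<phi>"
    and m0: "ball_decomp v q U \<phi> m0" "\<And>m. ball_decomp v q U \<phi> m \<Longrightarrow> m0 \<le> m"
  shows "\<forall>lam. lam \<noteq> 0 \<longrightarrow> v lam > max (real q * B / \<delta>\<^sup>2) (real q powi m0 / \<delta>) \<longrightarrow>
           set_lebesgue_integral \<mu> U (\<lambda>x. ch (lam * f x) * \<phi> x) = 0"
proof (intro allI impI)
  fix lam :: 'a
  assume "lam \<noteq> 0" and lam_large: "v lam > max (real q * B / \<delta>\<^sup>2) (real q powi m0 / \<delta>)"
  interpret local_field v q
    by (rule local_field.intro[OF F])
  define r where "r = real q / (v lam * \<delta>)"
  have "0 < v lam"
    using \<open>lam \<noteq> 0\<close> absv_nonneg[of lam] by (simp add: order_le_less)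
  then have "0 < r"
    unfolding r_def using q_ge_2 delta_pos by simp
  obtain x0 where "x0 \<in> U" "vnorm v (f' x0) = \<delta>"
    using delta_min(1) by blast
  obtain i where "vnorm v (f' x0) = v (f' x0 $ i)"
    by (rule vnorm_attained)
  with \<open>vnorm v (f' x0) = \<delta>\<close> have "r \<le> real q powi (- m0)"
    using q_divide_absv_le_power_int[of m0 "lam * f' x0 $ i"] lam_large delta_pos
    unfolding r_def by (simp add: absv_mult pos_divide_less_eq)
  then have ball: "Fball v c r \<subseteq> U" "\<And>x. x \<in> Fball v c r \<Longrightarrow> \<phi> x = \<phi> c" if "c \<in> U" for c
    using ball_decomp_Fball[OF m0(1) that] by blast+
  have unit: "v (vdot (R c z y) y) \<le> B" if "c \<in> U" "c + z \<in> U" "vnorm v y = 1" for c z y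
    unfolding B_def by (rule cSup_upper[OF _ B_bdd]) (use that in blast)
  have "0 \<le> B"
    using order_trans[OF absv_nonneg unit[of x0 0 "axis i 1"]] \<open>x0 \<in> U\<close> by (simp add: vnorm_axis)
  have "v lam * B * r\<^sup>2 = real q * (real q * B / \<delta>\<^sup>2 / v lam)"
    unfolding r_def using \<open>0 < v lam\<close> by (simp add: field_simps power2_eq_square)
  also have "\<dots> < real q * 1"
  proof (rule mult_strict_left_mono)
    show "real q * B / \<delta>\<^sup>2 / v lam < 1"
      using lam_large by (subst pos_divide_less_eq[OF \<open>0 < v lam\<close>]) simp
  qed (use q_ge_2 in simp)
  finally have small: "v lam * B * r\<^sup>2 < real q"
    by simp
  show "set_lebesgue_integral \<mu> U (\<lambda>x. ch (lam * f x) * \<phi> x) = 0"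
  proof (rule set_integral_eq_0_of_Fball_cover[OF U_compact haar \<open>0 < r\<close> ball(1)])
    fix c assume "c \<in> U"
    then have cx: "c + (x - c) \<in> U" if "x \<in> Fball v c r" for x
      using ball(1) that by auto
    have "real q = r * (v lam * \<delta>)"
      unfolding r_def using \<open>lam \<noteq> 0\<close> delta_pos by simp
    also have "\<dots> \<le> r * (v lam * vnorm v (f' c))"
      using delta_min(2)[OF \<open>c \<in> U\<close>] \<open>0 < r\<close> \<open>0 < v lam\<close> by simp
    finally have large: "real q \<le> r * (v lam * vnorm v (f' c))" .
    show "set_lebesgue_integral \<mu> (Fball v c r) (\<lambda>x. ch (lam * f x) * \<phi> x) = 0"
    proof (rule integral_Fball_eq_0_of_taylor[OF chi haar, where L = "\<lambda>x. R c (x - c)" and d = "f' c"])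
      show "f x = f c + vdot (f' c) (x - c) + vdot (R c (x - c) (x - c)) (x - c)"
        if "x \<in> Fball v c r" for x
        using taylor[OF \<open>c \<in> U\<close> cx[OF that]] by simp
    qed (use \<open>c \<in> U\<close> cx R_smult unit ball(2) \<open>0 \<le> B\<close> small large in auto)
  qed
qed

end
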